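(* Let $(P,Q)$ be a global solution of the Cucker–Smale model with velocity control described in the context. Suppose there exists a constant $0<M<\infty$ such that \[ \frac{M_{G'}\|P^0\|}{\kappa\mathcal M}<\min\Big\{\int_{\|Q^0\|}^M\psi(r)\,dr,\ \psi(M)\min_{\substack{i,j\in[N]\\ i\ne j}}|q_i^0-q_j^0|\Big\}. \] Then $\inf_{t\ge0}\min_{i,j\in[N],\,i\ne j}|q_i(t)-q_j(t)|>0$.
   Context: Let $N\ge1$, $d\ge1$, $\kappa>0$, $[N]=\{1,\dots,N\}$. The velocity control function $G:\mathbb R^d\to\mathbb R^d$ is $G(p)=g(|p|)\,p/|p|$ for $p\ne0$, $G(0)=0$, with $g\in C^1([0,\infty))$, $g(0)=0$, $0<m\le g'\le M'$ on every compact interval (constants depending on the interval), and $g$ convex or concave on $(0,\infty)$. The kernel $\psi:(0,\infty)\to(0,\infty)$ is bounded, Lipschitz continuous and nonincreasing. The model is, for $i\in[N]$, $t>0$: \[ \dot q_i=G(p_i),\qquad \dot p_i=\frac{\kappa}{N}\sum_{k=1}^N\psi(|q_k-q_i|)\big(G(p_k)-G(p_i)\big),\qquad (q_i,p_i)(0)=(q_i^0,p_i^0)\in\mathbb R^d\times\mathbb R^d. \] Notation: $\|Q^0\|^2=\sum_{i,j}|q_i^0-q_j^0|^2$, $\|P^0\|^2=\sum_{i,j}|p_i^0-p_j^0|^2$; $P^0_M=\max_i|p_i^0|$, $M_{G'}=\max\{g'(r):0\le r\le P^0_M\}$, $m_{G'}=\min\{g'(r):0\le r\le P^0_M\}$,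 $\mathcal M=\min\{m_{G'},\,m_{G'}^2/M_{G'}\}$. *)

theory Defs
  imports "HOL-Analysis.Analysis"
begin

definition velG :: "(real \<Rightarrow> real) \<Rightarrow> 'a::real_normed_vector \<Rightarrow> 'a" where
  "velG g p = (if p = 0 then 0 else (g (norm p) / norm p) *\<^sub>R p)"

definition oint :: "(real \<Rightarrow> real) \<Rightarrow> real \<Rightarrow> real \<Rightarrow> real" where
  "oint f a b = (if a \<le> b then integral {a..b} f else - integral {b..a} f)"

definition cfg_norm :: "nat \<Rightarrow> (nat \<Rightarrow> 'a::real_normed_vector) \<Rightarrow> real" where
  "cfg_norm N x = sqrt (\<Sum>i\<in>{1..N}. \<Sum>j\<in>{1..N}. (norm (x i - x j))\<^sup>2)"

end

theory Submission
  imports Defs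
begin

text \<open>
  As long as no two agents collide, a maximum principle keeps every speed below the initial
  maximum \<open>P\<^sup>0\<^sub>M\<close>, so along the solution the velocity control \<open>G\<close> is \<open>m\<^sub>G\<close>-strongly
  monotone and \<open>M\<^sub>G\<close>-Lipschitz. Hence \<open>\<parallel>P\<parallel>\<close> is dissipated at rate \<open>\<kappa> m\<^sub>G \<psi>(\<parallel>Q\<parallel>) \<parallel>P\<parallel>\<close>
  while \<open>\<parallel>Q\<parallel>\<close> grows at rate at most \<open>M\<^sub>G \<parallel>P\<parallel>\<close>, so that
  \<open>\<integral>\<^bsup>\<parallel>Q\<parallel>\<^esup> \<psi> + M\<^sub>G \<parallel>P\<parallel> / (\<kappa> m\<^sub>G)\<close> is a Lyapunov functional; by the first hypothesis
  \<open>\<parallel>Q\<parallel>\<close> stays below \<open>M\<close>. Then \<open>\<psi>(\<parallel>Q\<parallel>) \<ge> \<psi>(M)\<close>, \<open>\<parallel>P\<parallel>\<close> decays exponentially, and each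
  relative position \<open>q\<^sub>i - q\<^sub>j\<close> moves by at most \<open>M\<^sub>G \<parallel>P\<^sup>0\<parallel> / (\<kappa> m\<^sub>G \<psi>(M))\<close> in total,
  which the second hypothesis makes smaller than \<open>|q\<^sub>i\<^sup>0 - q\<^sub>j\<^sup>0|\<close>. A continuity argument
  removes the a priori assumption that no collision occurs.
\<close>

section \<open>Double sums\<close>

lemma sum_sum_antisym_eq_0:
  fixes F :: "'i \<Rightarrow> 'i \<Rightarrow> 'a::real_vector"
  assumes "\<And>i k. F k i = - F i k"
  shows "(\<Sum>i\<in>I. \<Sum>k\<in>I. F i k) = 0"
proof -
  have "(\<Sum>i\<in>I. \<Sum>k\<in>I. F i k) = (\<Sum>k\<in>I. \<Sum>i\<in>I. F i k)"
    by (rule sum.swap)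
  also have "\<dots> = (\<Sum>k\<in>I. \<Sum>i\<in>I. - F k i)"
    by (intro sum.cong refl) (rule assms)
  also have "\<dots> = - (\<Sum>i\<in>I. \<Sum>k\<in>I. F i k)"
    by (simp add: sum_negf)
  finally show ?thesis
    by (simp add: eq_neg_iff_add_eq_0 flip: scaleR_2)
qed

lemma sum_sum_symmetric_weight_inner:
  fixes X Y :: "'i \<Rightarrow> 'a::real_inner"
  assumes "\<And>i k. w i k = w k i"
  shows "(\<Sum>i\<in>I. \<Sum>k\<in>I. w i k * inner (X i) (Y k - Y i))
       = - (1/2) * (\<Sum>i\<in>I. \<Sum>k\<in>I. w i k * inner (X k - X i) (Y k - Y i))"
proof -
  have "(\<Sum>i\<in>I. \<Sum>k\<in>I. w i k * inner (X i) (Y k - Y i))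
      = (\<Sum>i\<in>I. \<Sum>k\<in>I. (1/2) * (w i k * inner (X i + X k) (Y k - Y i))
            - (1/2) * (w i k * inner (X k - X i) (Y k - Y i)))"
    by (intro sum.cong refl) (simp add: inner_add_left inner_diff_left algebra_simps)
  also have "\<dots> = (1/2) * (\<Sum>i\<in>I. \<Sum>k\<in>I. w i k * inner (X i + X k) (Y k - Y i))
      - (1/2) * (\<Sum>i\<in>I. \<Sum>k\<in>I. w i k * inner (X k - X i) (Y k - Y i))"
    by (simp only: sum_subtractf sum_distrib_left)
  also have "(\<Sum>i\<in>I. \<Sum>k\<in>I. w i k * inner (X i + X k) (Y k - Y i)) = 0"
  proof (rule sum_sum_antisym_eq_0)
    fix i k
    show "w k i * inner (X k + X i) (Y i - Y k) = - (w i k * inner (X i + X k) (Y k - Y i))"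
      using assms[of k i] by (simp add: inner_diff_right inner_add_left algebra_simps)
  qed
  finally show ?thesis by simp
qed

lemma sum_sum_inner_diff_diff:
  fixes x y :: "'i \<Rightarrow> 'a::real_inner"
  assumes "finite I"
  shows "(\<Sum>i\<in>I. \<Sum>j\<in>I. inner (x i - x j) (y i - y j))
     = 2 * real (card I) * (\<Sum>i\<in>I. inner (x i) (y i)) - 2 * inner (sum x I) (sum y I)"
proof -
  have "(\<Sum>i\<in>I. \<Sum>j\<in>I. inner (x i - x j) (y i - y j))
     = (\<Sum>i\<in>I. \<Sum>j\<in>I. inner (x i) (y i)) - (\<Sum>i\<in>I. \<Sum>j\<in>I. inner (x i) (y j))
       - (\<Sum>i\<in>I. \<Sum>j\<in>I. inner (x j) (y i)) + (\<Sum>i\<in>I. \<Sum>j\<in>I. inner (x j) (y j))"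
    by (simp only: inner_diff_left inner_diff_right sum_subtractf sum.distrib)
  also have "(\<Sum>i\<in>I. \<Sum>j\<in>I. inner (x i) (y i)) = real (card I) * (\<Sum>i\<in>I. inner (x i) (y i))"
    by (simp add: sum_distrib_left)
  also have "(\<Sum>i\<in>I. \<Sum>j\<in>I. inner (x j) (y j)) = real (card I) * (\<Sum>i\<in>I. inner (x i) (y i))"
    by simp
  also have "(\<Sum>i\<in>I. \<Sum>j\<in>I. inner (x i) (y j)) = inner (sum x I) (sum y I)"
    unfolding inner_sum_left unfolding inner_sum_right ..
  also have "(\<Sum>i\<in>I. \<Sum>j\<in>I. inner (x j) (y i)) = inner (sum x I) (sum y I)"
  proof -
    have "(\<Sum>i\<in>I. \<Sum>j\<in>I. inner (x j) (y i)) = (\<Sum>j\<in>I. \<Sum>i\<in>I. inner (x j) (y i))"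
      by (rule sum.swap)
    then show ?thesis unfolding inner_sum_left unfolding inner_sum_right .
  qed
  finally show ?thesis by simp
qed

lemma double_sum_Cauchy_Schwarz:
  fixes a b :: "'i \<Rightarrow> 'i \<Rightarrow> real"
  assumes "\<And>i j. 0 \<le> a i j" "\<And>i j. 0 \<le> b i j"
  shows "(\<Sum>i\<in>I. \<Sum>j\<in>I. a i j * b i j)
     \<le> sqrt (\<Sum>i\<in>I. \<Sum>j\<in>I. (a i j)\<^sup>2) * sqrt (\<Sum>i\<in>I. \<Sum>j\<in>I. (b i j)\<^sup>2)"
proof -
  have prod: "(\<Sum>i\<in>I. \<Sum>j\<in>I. a i j * b i j) = (\<Sum>x\<in>I \<times> I. \<bar>case_prod a x\<bar> * \<bar>case_prod b x\<bar>)"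
    by (subst sum.cartesian_product) (auto intro!: sum.cong simp: assms abs_of_nonneg)
  have sq: "(\<Sum>i\<in>I. \<Sum>j\<in>I. (c i j)\<^sup>2) = (\<Sum>x\<in>I \<times> I. (case_prod c x)\<^sup>2)" for c :: "'i \<Rightarrow> 'i \<Rightarrow> real"
    by (subst sum.cartesian_product) (auto intro!: sum.cong)
  show ?thesis
    using L2_set_mult_ineq[of "case_prod a" "case_prod b" "I \<times> I"]
    unfolding prod sq L2_set_def .
qed

section \<open>Real analysis\<close>

lemma has_real_derivative_norm_power2:
  fixes f :: "real \<Rightarrow> 'a::real_inner"
  assumes "(f has_vector_derivative f') (at t)"
  shows "((\<lambda>t. (norm (f t))\<^sup>2) has_real_derivative 2 * inner (f t) f') (at t)"
proof -
  have "((\<lambda>t. inner (f t) (f t)) has_derivative (\<lambda>h. inner (f t) (h *\<^sub>R f') + inner (h *\<^sub>R f') (f t))) (at t)"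
    using assms unfolding has_vector_derivative_def
    by (intro derivative_eq_intros) auto
  moreover have "(\<lambda>h. inner (f t) (h *\<^sub>R f') + inner (h *\<^sub>R f') (f t)) = (*) (2 * inner (f t) f')"
    by (rule ext) (simp add: inner_commute algebra_simps)
  ultimately show ?thesis
    unfolding power2_norm_eq_inner has_field_derivative_def by simp
qed

lemma has_real_derivative_max0_power2:
  "((\<lambda>x. (max 0 x)\<^sup>2) has_real_derivative 2 * max 0 x) (at x)"
proof -
  consider "x > 0" | "x < 0" | "x = 0" by linarith
  then show ?thesis
  proof cases
    case 1
    have "((\<lambda>x. x\<^sup>2) has_real_derivative 2 * x) (at x)"
      by (auto intro!: derivative_eq_intros)
    then have "((\<lambda>x. (max 0 x)\<^sup>2) has_real_derivative 2 * x) (at x)"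
      by (rule has_field_derivative_transform_within_open[of _ _ _ "{0<..}"]) (use 1 in auto)
    then show ?thesis using 1 by simp
  next
    case 2
    have "((\<lambda>x. 0) has_real_derivative 0) (at x)" by simp
    then have "((\<lambda>x. (max 0 x)\<^sup>2) has_real_derivative 0) (at x)"
      by (rule has_field_derivative_transform_within_open[of _ _ _ "{..<0}"]) (use 2 in auto)
    then show ?thesis using 2 by simp
  next
    case 3
    have "(\<lambda>h::real. (max 0 h)\<^sup>2 / h) \<midarrow>0\<rightarrow> 0"
    proof (rule Lim_null_comparison)
      show "\<forall>\<^sub>F h in at 0. norm ((max 0 h)\<^sup>2 / h) \<le> \<bar>h\<bar>"
        by (intro always_eventually allI) (simp add: power2_eq_square max_def abs_mult)
      show "((\<lambda>h. \<bar>h\<bar>) \<longlongrightarrow> 0) (at (0::real))"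
        by (intro tendsto_rabs_zero tendsto_ident_at)
    qed
    then show ?thesis using 3 by (simp add: DERIV_def)
  qed
qed

lemma mvt_on_nonneg_reals:
  assumes g_deriv: "\<And>r. 0 \<le> r \<Longrightarrow> (g has_real_derivative dg r) (at r within {0..})"
    and "0 \<le> r" "0 \<le> s"
  obtains z where "min r s \<le> z" "z \<le> max r s" "g r - g s = (r - s) * dg z"
proof -
  have mvt: "\<exists>z\<in>{a..b}. g b - g a = (b - a) * dg z" if "0 \<le> a" "a \<le> b" for a b
  proof -
    have "(g has_derivative (*) (dg x)) (at x within {a..b})" if "a \<le> x" "x \<le> b" for x
      using g_deriv[of x] that \<open>0 \<le> a\<close> unfolding has_field_derivative_def
      by (auto intro: has_derivative_subset)
    from mvt_very_simple[OF \<open>a \<le> b\<close> this] show ?thesis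
      by (auto simp: mult.commute)
  qed
  show ?thesis
  proof (cases "s \<le> r")
    case True
    then show ?thesis using mvt[of s r] assms that by auto
  next
    case False
    then obtain z where "z \<in> {r..s}" "g s - g r = (s - r) * dg z" using mvt[of r s] assms by auto
    then show ?thesis using False that[of z] by (auto simp: algebra_simps)
  qed
qed

lemma mono_on_if_deriv_nonneg:
  assumes "\<And>r. 0 \<le> r \<Longrightarrow> (g has_real_derivative dg r) (at r within {0..})"
    and "\<And>r. 0 \<le> r \<Longrightarrow> 0 \<le> dg r"
  shows "mono_on {0..} g"
proof (rule mono_onI)
  fix s r :: real assume "s \<in> {0..}" "r \<in> {0..}" "s \<le> r"
  then obtain z where "s \<le> z" "g r - g s = (r - s) * dg z"
    using mvt_on_nonneg_reals[OF assms(1), of r s] by auto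
  moreover have "0 \<le> (r - s) * dg z"
    using assms(2)[of z] \<open>s \<le> z\<close> \<open>s \<in> {0..}\<close> \<open>s \<le> r\<close> by simp
  ultimately show "g s \<le> g r" by simp
qed

lemma increments_if_deriv_bounds:
  assumes g_deriv: "\<And>r. 0 \<le> r \<Longrightarrow> (g has_real_derivative dg r) (at r within {0..})"
    and "0 \<le> m" and dg_bounds: "\<forall>r\<in>{0..R}. m \<le> dg r \<and> dg r \<le> M"
    and "r \<in> {0..R}" "s \<in> {0..R}"
  shows "\<bar>g r - g s\<bar> \<le> M * \<bar>r - s\<bar>" and "m * (r - s)\<^sup>2 \<le> (g r - g s) * (r - s)"
proof -
  obtain z where z: "min r s \<le> z" "z \<le> max r s" "g r - g s = (r - s) * dg z"
    using mvt_on_nonneg_reals[OF g_deriv, of r s] assms(4,5) by auto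
  have "z \<in> {0..R}" using z(1,2) assms(4,5) by auto
  then have "m \<le> dg z" "dg z \<le> M" using dg_bounds by auto
  moreover from this have "\<bar>r - s\<bar> * dg z \<le> \<bar>r - s\<bar> * M" "m * (r - s)\<^sup>2 \<le> dg z * (r - s)\<^sup>2"
    using \<open>0 \<le> m\<close> by (auto intro: mult_left_mono mult_right_mono)
  moreover have "\<bar>g r - g s\<bar> = \<bar>r - s\<bar> * dg z" "(g r - g s) * (r - s) = dg z * (r - s)\<^sup>2"
    using z(3) \<open>m \<le> dg z\<close> \<open>0 \<le> m\<close> by (simp_all add: abs_mult power2_eq_square)
  ultimately show "\<bar>g r - g s\<bar> \<le> M * \<bar>r - s\<bar>" "m * (r - s)\<^sup>2 \<le> (g r - g s) * (r - s)"
    by (simp_all add: mult.commute)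
qed

lemma continuous_on_if_abs_Lipschitz:
  fixes f :: "real \<Rightarrow> real"
  assumes "\<And>r s. r \<in> S \<Longrightarrow> s \<in> S \<Longrightarrow> \<bar>f r - f s\<bar> \<le> L * \<bar>r - s\<bar>"
  shows "continuous_on S f"
proof (rule lipschitz_on_continuous_on)
  show "(max L 0)-lipschitz_on S f"
  proof (rule lipschitz_onI)
    fix r s assume "r \<in> S" "s \<in> S"
    then have "\<bar>f r - f s\<bar> \<le> L * \<bar>r - s\<bar>" by (rule assms)
    also have "\<dots> \<le> max L 0 * \<bar>r - s\<bar>" by (intro mult_right_mono) auto
    finally show "dist (f r) (f s) \<le> max L 0 * dist r s" by (simp add: dist_real_def)
  qed simp
qed

lemma INF_SUP_bounds:
  fixes f :: "'a \<Rightarrow> real"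
  assumes "S \<noteq> {}" "\<And>x. x \<in> S \<Longrightarrow> m \<le> f x \<and> f x \<le> M"
  shows "m \<le> (INF x\<in>S. f x)" "\<And>x. x \<in> S \<Longrightarrow> (INF x\<in>S. f x) \<le> f x \<and> f x \<le> (SUP x\<in>S. f x)"
proof -
  have "bdd_below (f ` S)" "bdd_above (f ` S)"
    using assms(2) by (meson bdd_belowI2, meson bdd_aboveI2)
  then show "\<And>x. x \<in> S \<Longrightarrow> (INF x\<in>S. f x) \<le> f x \<and> f x \<le> (SUP x\<in>S. f x)"
    by (auto intro: cINF_lower cSUP_upper)
  show "m \<le> (INF x\<in>S. f x)"
    using assms by (intro cINF_greatest) auto
qed

lemma le_if_le_add_all_pos_mult:
  fixes x y C :: real
  assumes "0 \<le> C" "\<And>s. 0 < s \<Longrightarrow> x \<le> y + C * s"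
  shows "x \<le> y"
proof (rule field_le_epsilon)
  fix e :: real assume "0 < e"
  then have "0 < e / (C + 1)" using assms(1) by simp
  then have "x \<le> y + C * (e / (C + 1))" by (rule assms(2))
  also have "C * (e / (C + 1)) \<le> e" using \<open>0 < e\<close> assms(1) by (simp add: field_simps)
  finally show "x \<le> y + e" by simp
qed

lemma sqrt_diff_le_divide_sqrt_add:
  fixes E s :: real
  assumes "0 \<le> E" "0 < s"
  shows "sqrt E - s \<le> E / sqrt (E + s\<^sup>2)"
proof -
  have pos: "0 < sqrt (E + s\<^sup>2)" using assms by (simp add: add_nonneg_pos)
  have le: "sqrt (E + s\<^sup>2) \<le> sqrt E + s"
    by (rule real_le_lsqrt) (use assms in \<open>auto simp: power2_eq_square algebra_simps\<close>)
  have "(sqrt E - s) * sqrt (E + s\<^sup>2) \<le> E"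
  proof (cases "sqrt E \<le> s")
    case True
    then have "(sqrt E - s) * sqrt (E + s\<^sup>2) \<le> 0" using pos by (simp add: mult_nonpos_nonneg)
    then show ?thesis using assms by linarith
  next
    case False
    then have "(sqrt E - s) * sqrt (E + s\<^sup>2) \<le> (sqrt E - s) * (sqrt E + s)"
      using le by (intro mult_left_mono) auto
    also have "\<dots> \<le> E" using assms by (simp add: algebra_simps)
    finally show ?thesis .
  qed
  then show ?thesis using pos by (simp add: pos_le_divide_eq)
qed

lemma integral_has_real_derivative_at:
  assumes "continuous_on {0<..} f" "0 < a" "a < x"
  shows "((\<lambda>x. integral {a..x} f) has_real_derivative f x) (at x)"
proof -
  have "continuous_on {a..x+1} f"
    using assms by (auto intro: continuous_on_subset)
  then have "((\<lambda>x. integral {a..x} f) has_real_derivative f x) (at x within {a..x+1})"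
    by (rule integral_has_real_derivative) (use assms in auto)
  moreover have "at x within {a..x+1} = at x"
    by (rule at_within_interior) (use assms in auto)
  ultimately show ?thesis by simp
qed

lemma oint_eq_integral_diff:
  assumes "continuous_on {0<..} f" "0 < c" "c \<le> a" "c \<le> b"
  shows "oint f a b = integral {c..b} f - integral {c..a} f"
proof -
  have combine: "integral {c..x} f + integral {x..y} f = integral {c..y} f" if "c \<le> x" "x \<le> y" for x y
  proof (rule Henstock_Kurzweil_Integration.integral_combine[OF that integrable_continuous_real])
    show "continuous_on {c..y} f" by (rule continuous_on_subset[OF assms(1)]) (use assms(2) in auto)
  qed
  show ?thesis
    using combine[of a b] combine[of b a] assms by (cases "a \<le> b") (auto simp: oint_def)
qed

lemma oint_add:
  assumes "continuous_on {0<..} f" "0 < a" "0 < b" "0 < c"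
  shows "oint f a b + oint f b c = oint f a c"
  using oint_eq_integral_diff[OF assms(1), of "min a (min b c)"] assms by simp

lemma oint_nonneg:
  assumes "continuous_on {0<..} f" "\<And>x. 0 < x \<Longrightarrow> 0 \<le> f x" "0 < a" "a \<le> b"
  shows "0 \<le> oint f a b"
  unfolding oint_def using assms
  by (auto intro!: integral_nonneg integrable_continuous_real continuous_on_subset[OF assms(1)])

section \<open>Radial velocity fields\<close>

lemma inner_scaleR_diff_nonneg:
  fixes u v :: "'a::real_inner"
  assumes "0 \<le> a" "0 \<le> b" "0 \<le> c" "0 \<le> d"
    and "0 \<le> (a * norm u - b * norm v) * (c * norm u - d * norm v)"
  shows "0 \<le> inner (a *\<^sub>R u - b *\<^sub>R v) (c *\<^sub>R u - d *\<^sub>R v)"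
proof -
  have expand: "inner (a *\<^sub>R u - b *\<^sub>R v) (c *\<^sub>R u - d *\<^sub>R v)
      = a*c*(norm u)\<^sup>2 + b*d*(norm v)\<^sup>2 - (a*d + b*c) * inner u v"
    by (simp add: inner_diff inner_commute power2_norm_eq_inner algebra_simps)
  have "(a*d + b*c) * inner u v \<le> (a*d + b*c) * (norm u * norm v)"
    using assms(1-4) norm_cauchy_schwarz by (intro mult_left_mono) auto
  then show ?thesis using expand assms(5)
    by (simp add: algebra_simps power2_eq_square)
qed

lemma radial_strongly_monotone:
  fixes u v :: "'a::real_inner"
  assumes "m \<le> a" "m \<le> b"
    and "m * (norm u - norm v)\<^sup>2 \<le> (a * norm u - b * norm v) * (norm u - norm v)"
  shows "m * (norm (u - v))\<^sup>2 \<le> inner (u - v) (a *\<^sub>R u - b *\<^sub>R v)"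
proof -
  have expand: "inner (u - v) (a *\<^sub>R u - b *\<^sub>R v) = a*(norm u)\<^sup>2 + b*(norm v)\<^sup>2 - (a + b) * inner u v"
    by (simp add: inner_diff inner_commute power2_norm_eq_inner algebra_simps)
  have norm_diff: "(norm (u - v))\<^sup>2 = (norm u)\<^sup>2 + (norm v)\<^sup>2 - 2 * inner u v"
    by (simp add: inner_diff inner_commute power2_norm_eq_inner algebra_simps)
  have "(a + b - 2*m) * inner u v \<le> (a + b - 2*m) * (norm u * norm v)"
    using assms norm_cauchy_schwarz by (intro mult_left_mono) auto
  then show ?thesis unfolding expand norm_diff using assms(3)
    by (simp only: algebra_simps power2_eq_square; linarith)
qed

lemma radial_lipschitz:
  fixes u v :: "'a::real_inner"
  assumes "0 \<le> a" "0 \<le> b" "a \<le> M" "b \<le> M"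
    and "\<bar>a * norm u - b * norm v\<bar> \<le> M * \<bar>norm u - norm v\<bar>"
  shows "norm (a *\<^sub>R u - b *\<^sub>R v) \<le> M * norm (u - v)"
proof -
  have "0 \<le> M" using assms by linarith
  have expand: "(norm (a *\<^sub>R u - b *\<^sub>R v))\<^sup>2 = a*a*(norm u)\<^sup>2 + b*b*(norm v)\<^sup>2 - 2*a*b * inner u v"
    by (simp add: inner_diff inner_commute power2_norm_eq_inner algebra_simps)
  have norm_diff: "(norm (u - v))\<^sup>2 = (norm u)\<^sup>2 + (norm v)\<^sup>2 - 2 * inner u v"
    by (simp add: inner_diff inner_commute power2_norm_eq_inner algebra_simps)
  have "a * b \<le> M * M" using assms by (intro mult_mono) auto
  then have "(M*M - a*b) * inner u v \<le> (M*M - a*b) * (norm u * norm v)"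
    using norm_cauchy_schwarz by (intro mult_left_mono) auto
  moreover have "\<bar>a * norm u - b * norm v\<bar> \<le> \<bar>M * (norm u - norm v)\<bar>"
    using assms(5) \<open>0 \<le> M\<close> by (simp add: abs_mult)
  then have "(a * norm u - b * norm v)\<^sup>2 \<le> (M * (norm u - norm v))\<^sup>2"
    by (simp only: abs_le_square_iff)
  ultimately have "(norm (a *\<^sub>R u - b *\<^sub>R v))\<^sup>2 \<le> (M * norm (u - v))\<^sup>2"
    unfolding power_mult_distrib expand norm_diff
    by (simp only: algebra_simps power2_eq_square; linarith)
  then show ?thesis using \<open>0 \<le> M\<close> by (simp add: power2_le_iff_abs_le)
qed

lemma velG_eq_scaleR: "velG g x = (g (norm x) / norm x) *\<^sub>R x"
  by (simp add: velG_def)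

lemma velG_strongly_monotone_lipschitz:
  fixes x y :: "'a::real_inner"
  assumes g_deriv: "\<And>r. 0 \<le> r \<Longrightarrow> (g has_real_derivative dg r) (at r within {0..})"
    and "g 0 = 0" and "0 \<le> m" and dg_bounds: "\<forall>r\<in>{0..R}. m \<le> dg r \<and> dg r \<le> M"
    and "norm x \<le> R" "norm y \<le> R"
  shows "m * (norm (x - y))\<^sup>2 \<le> inner (x - y) (velG g x - velG g y)"
    and "norm (velG g x - velG g y) \<le> M * norm (x - y)"
proof -
  note increments = increments_if_deriv_bounds[OF g_deriv \<open>0 \<le> m\<close> dg_bounds]
  \<comment> \<open>Any slope represents \<open>velG g 0 = 0\<close>; taking \<open>m\<close> there keeps all slopes in \<open>[m, M]\<close>.\<close>
  define slope where "slope z = (if z = 0 then m else g (norm z) / norm z)" for z :: 'a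
  have velG: "velG g z = slope z *\<^sub>R z" for z
    by (simp add: velG_def slope_def)
  have slope_norm: "slope z * norm z = g (norm z)" for z
    by (auto simp: slope_def \<open>g 0 = 0\<close>)
  have slope_bounds: "m \<le> slope z \<and> slope z \<le> M" if "norm z \<le> R" for z
  proof (cases "z = 0")
    case True
    then show ?thesis using dg_bounds that by (force simp: slope_def)
  next
    case False
    then have "norm z > 0" by simp
    moreover have "\<bar>g (norm z)\<bar> \<le> M * norm z" "m * (norm z)\<^sup>2 \<le> g (norm z) * norm z"
      using increments[of "norm z" 0] that \<open>g 0 = 0\<close> norm_ge_zero[of z] by auto
    ultimately show ?thesis using False
      by (auto simp: slope_def field_simps power2_eq_square)
  qed
  have x: "m \<le> slope x" "slope x \<le> M" and y: "m \<le> slope y" "slope y \<le> M"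
    using slope_bounds assms(5,6) by auto
  have "\<bar>g (norm x) - g (norm y)\<bar> \<le> M * \<bar>norm x - norm y\<bar>"
    and "m * (norm x - norm y)\<^sup>2 \<le> (g (norm x) - g (norm y)) * (norm x - norm y)"
    using increments[of "norm x" "norm y"] assms(5,6) by auto
  then show "m * (norm (x - y))\<^sup>2 \<le> inner (x - y) (velG g x - velG g y)"
    and "norm (velG g x - velG g y) \<le> M * norm (x - y)"
    unfolding velG slope_norm[symmetric] using x y \<open>0 \<le> m\<close>
    by (auto intro!: radial_strongly_monotone radial_lipschitz)
qed

lemma velG_pairing_nonneg:
  fixes x y :: "'a::real_inner"
  assumes "mono_on {0..} f" "\<And>r. 0 \<le> r \<Longrightarrow> 0 \<le> f r" "mono_on {0..} g" "g 0 = 0"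
  shows "0 \<le> inner (f (norm x) *\<^sub>R x - f (norm y) *\<^sub>R y) (velG g x - velG g y)"
proof -
  have g_nonneg: "0 \<le> g r" if "0 \<le> r" for r
    using mono_onD[OF assms(3), of 0 r] that assms(4) by auto
  have slope_norm: "g (norm z) / norm z * norm z = g (norm z)" for z :: 'a
    by (cases "z = 0") (auto simp: assms(4))
  have both_mono: "f s * s \<le> f r * r \<and> g s \<le> g r" if "0 \<le> s" "s \<le> r" for r s
    using that mono_onD[OF assms(1), of s r] mono_onD[OF assms(3), of s r] assms(2)[of s]
    by (auto intro: mult_mono)
  have "0 \<le> (f (norm x) * norm x - f (norm y) * norm y) * (g (norm x) - g (norm y))"
    using both_mono[of "norm x" "norm y"] both_mono[of "norm y" "norm x"]
    by (cases "norm y \<le> norm x") (auto intro: mult_nonneg_nonneg mult_nonpos_nonpos)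
  then show ?thesis unfolding velG_eq_scaleR
    by (intro inner_scaleR_diff_nonneg) (auto simp: assms(2) g_nonneg slope_norm)
qed

section \<open>A continuity argument\<close>

lemma finite_uniform_margin:
  fixes a b :: "'a \<Rightarrow> real"
  assumes "finite P" "\<And>x. x \<in> P \<Longrightarrow> a x < b x"
  obtains \<delta> where "0 < \<delta>" "\<And>x. x \<in> P \<Longrightarrow> a x + \<delta> < b x"
proof -
  define \<delta> where "\<delta> = Min (insert 1 ((\<lambda>x. b x - a x) ` P)) / 2"
  have "0 < \<delta>" using assms by (simp add: \<delta>_def)
  moreover have "a x + \<delta> < b x" if "x \<in> P" for x
  proof -
    have "Min (insert 1 ((\<lambda>x. b x - a x) ` P)) \<le> b x - a x" using assms(1) that by simp
    then show ?thesis using \<open>0 < \<delta>\<close> by (simp add: \<delta>_def)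
  qed
  ultimately show ?thesis using that by blast
qed

lemma first_nonpositive_time:
  fixes h :: "'k \<Rightarrow> real \<Rightarrow> real"
  assumes "finite K" and cont: "\<And>k. k \<in> K \<Longrightarrow> continuous_on {0..} (h k)"
    and "0 \<le> t\<^sub>1" "k\<^sub>1 \<in> K" "h k\<^sub>1 t\<^sub>1 \<le> 0"
  obtains T k where "0 \<le> T" "k \<in> K" "h k T \<le> 0" "\<And>k t. k \<in> K \<Longrightarrow> 0 \<le> t \<Longrightarrow> t < T \<Longrightarrow> 0 < h k t"
proof -
  define C where "C = (\<Union>k\<in>K. {0..t\<^sub>1} \<inter> h k -` {..0})"
  have "closed C" unfolding C_def
  proof (intro closed_UN \<open>finite K\<close> ballI)
    fix k assume "k \<in> K"
    then have "continuous_on {0..t\<^sub>1} (h k)"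
      by (rule continuous_on_subset[OF cont]) auto
    then show "closed ({0..t\<^sub>1} \<inter> h k -` {..0})" by (rule continuous_closed_preimage) auto
  qed
  moreover have "t\<^sub>1 \<in> C" using assms(3-5) by (auto simp: C_def)
  moreover have "bdd_below C" by (rule bdd_belowI[of _ 0]) (auto simp: C_def)
  ultimately have "Inf C \<in> C" by (intro closed_contains_Inf) auto
  then obtain k where "k \<in> K" "0 \<le> Inf C" "h k (Inf C) \<le> 0" by (auto simp: C_def)
  moreover have "0 < h k' t" if "k' \<in> K" "0 \<le> t" "t < Inf C" for k' t
  proof (rule ccontr)
    assume "\<not> 0 < h k' t"
    then have "t \<in> C" using that \<open>Inf C \<in> C\<close> by (force simp: C_def)
    then have "Inf C \<le> t" using \<open>bdd_below C\<close> by (rule cInf_lower)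
    then show False using that by simp
  qed
  ultimately show ?thesis using that by blast
qed

lemma continuity_argument:
  fixes h :: "'k \<Rightarrow> real \<Rightarrow> real"
  assumes "finite K" and cont: "\<And>k. k \<in> K \<Longrightarrow> continuous_on {0..} (h k)"
    and init: "\<And>k. k \<in> K \<Longrightarrow> 0 < h k 0"
    and improve: "\<And>T. 0 \<le> T \<Longrightarrow> \<forall>t\<in>{0..T}. \<forall>k\<in>K. 0 \<le> h k t \<Longrightarrow> \<forall>t\<in>{0..T}. \<forall>k\<in>K. 0 < h k t"
    and "0 \<le> t" "k \<in> K"
  shows "0 < h k t"
proof (rule ccontr)
  assume "\<not> 0 < h k t"
  then obtain T k' where T: "0 \<le> T" "k' \<in> K" "h k' T \<le> 0"
    and before: "\<And>k t. k \<in> K \<Longrightarrow> 0 \<le> t \<Longrightarrow> t < T \<Longrightarrow> 0 < h k t"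
    using first_nonpositive_time[of K h t k, OF \<open>finite K\<close> cont \<open>0 \<le> t\<close> \<open>k \<in> K\<close>] by auto
  have "0 < T" using T init[of k'] by (cases "T = 0") auto
  have "0 \<le> h k'' t'" if "k'' \<in> K" "t' \<in> {0..T}" for k'' t'
  proof (rule continuous_ge_on_closure[where S = "{0..<T}" and f = "h k''"])
    show "continuous_on (closure {0..<T}) (h k'')"
      by (rule continuous_on_subset[OF cont[OF \<open>k'' \<in> K\<close>]]) (use \<open>0 < T\<close> in auto)
    show "t' \<in> closure {0..<T}" using \<open>0 < T\<close> that(2) by simp
  qed (use before \<open>k'' \<in> K\<close> in \<open>auto simp: less_imp_le\<close>)
  then have "0 < h k' T" using improve[OF \<open>0 \<le> T\<close>] T by auto
  with T show False by simp
qed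

section \<open>The Cucker--Smale model with velocity control\<close>

locale cucker_smale =
  fixes N :: nat and \<kappa> :: real and g dg \<psi> :: "real \<Rightarrow> real"
    and q p :: "nat \<Rightarrow> real \<Rightarrow> 'a::euclidean_space"
  assumes N_ge_2: "2 \<le> N" and kappa_pos: "0 < \<kappa>"
    and g_deriv: "\<And>r. 0 \<le> r \<Longrightarrow> (g has_real_derivative dg r) (at r within {0..})"
    and g_0: "g 0 = 0"
    and dg_bounds: "\<And>b. \<exists>m M'. 0 < m \<and> (\<forall>r\<in>{0..b}. m \<le> dg r \<and> dg r \<le> M')"
    and psi_pos: "\<And>r. 0 < r \<Longrightarrow> 0 < \<psi> r"
    and psi_lip: "\<exists>L. \<forall>r>0. \<forall>s>0. \<bar>\<psi> r - \<psi> s\<bar> \<le> L * \<bar>r - s\<bar>"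
    and psi_antimono: "\<And>r s. 0 < r \<Longrightarrow> r \<le> s \<Longrightarrow> \<psi> s \<le> \<psi> r"
    and q_cont: "\<And>i. i \<in> {1..N} \<Longrightarrow> continuous_on {0..} (q i)"
    and p_cont: "\<And>i. i \<in> {1..N} \<Longrightarrow> continuous_on {0..} (p i)"
    and q_ode: "\<And>i t. i \<in> {1..N} \<Longrightarrow> 0 < t \<Longrightarrow>
                  (q i has_vector_derivative velG g (p i t)) (at t)"
    and p_ode: "\<And>i t. i \<in> {1..N} \<Longrightarrow> 0 < t \<Longrightarrow>
                  (p i has_vector_derivative
                     (\<kappa> / real N) *\<^sub>R (\<Sum>k\<in>{1..N}. \<psi> (norm (q k t - q i t)) *\<^sub>R
                         (velG g (p k t) - velG g (p i t)))) (at t)"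
begin

definition "I = {1..N}"
definition "vel i t = velG g (p i t)"
definition "weight i k t = \<psi> (norm (q k t - q i t))"
definition "force i t = (\<kappa> / real N) *\<^sub>R (\<Sum>k\<in>I. weight i k t *\<^sub>R (vel k t - vel i t))"

text \<open>\<open>Psq t\<close> and \<open>Qsq t\<close> are \<open>\<parallel>P(t)\<parallel>\<^sup>2\<close> and \<open>\<parallel>Q(t)\<parallel>\<^sup>2\<close> in the notation of the paper.\<close>

definition "Psq t = (\<Sum>i\<in>I. \<Sum>j\<in>I. (norm (p i t - p j t))\<^sup>2)"
definition "Qsq t = (\<Sum>i\<in>I. \<Sum>j\<in>I. (norm (q i t - q j t))\<^sup>2)"
definition "dissipation t = (\<Sum>i\<in>I. \<Sum>k\<in>I. weight i k t * inner (p k t - p i t) (vel k t - vel i t))"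

lemma finite_I: "finite I" and card_I: "card I = N"
  by (auto simp: I_def)

lemma weight_sym: "weight i k t = weight k i t"
  by (simp add: weight_def norm_minus_commute)

lemma p_has_derivative: "i \<in> I \<Longrightarrow> 0 < t \<Longrightarrow> (p i has_vector_derivative force i t) (at t)"
  using p_ode by (simp add: force_def I_def weight_def vel_def)

lemma q_has_derivative: "i \<in> I \<Longrightarrow> 0 < t \<Longrightarrow> (q i has_vector_derivative vel i t) (at t)"
  using q_ode by (simp add: I_def vel_def)

lemma sum_force_eq_0: "(\<Sum>i\<in>I. force i t) = 0"
proof -
  have "(\<Sum>i\<in>I. \<Sum>k\<in>I. weight i k t *\<^sub>R (vel k t - vel i t)) = 0"
    by (rule sum_sum_antisym_eq_0) (simp add: weight_sym[of _ _ t] algebra_simps)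
  then show ?thesis by (simp add: force_def flip: scaleR_sum_right)
qed

lemma sum_inner_force:
  "(\<Sum>i\<in>I. inner (X i) (force i t)) = - (\<kappa> / (2 * real N)) *
     (\<Sum>i\<in>I. \<Sum>k\<in>I. weight i k t * inner (X k - X i) (vel k t - vel i t))"
proof -
  have "(\<Sum>i\<in>I. inner (X i) (force i t))
      = (\<kappa> / real N) * (\<Sum>i\<in>I. \<Sum>k\<in>I. weight i k t * inner (X i) (vel k t - vel i t))"
    by (simp add: force_def inner_sum_right sum_distrib_left)
  also have "\<dots> = (\<kappa> / real N) * (- (1/2) *
      (\<Sum>i\<in>I. \<Sum>k\<in>I. weight i k t * inner (X k - X i) (vel k t - vel i t)))"
    by (subst sum_sum_symmetric_weight_inner) (auto intro: weight_sym)
  finally show ?thesis by simp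
qed

lemma Psq_has_derivative:
  assumes "0 < t"
  shows "(Psq has_real_derivative - 2 * \<kappa> * dissipation t) (at t)"
proof -
  have "(Psq has_real_derivative (\<Sum>i\<in>I. \<Sum>j\<in>I. 2 * inner (p i t - p j t) (force i t - force j t))) (at t)"
    unfolding Psq_def using assms
    by (intro DERIV_sum has_real_derivative_norm_power2 has_vector_derivative_diff p_has_derivative)
  moreover have "(\<Sum>i\<in>I. \<Sum>j\<in>I. 2 * inner (p i t - p j t) (force i t - force j t))
     = 4 * real N * (\<Sum>i\<in>I. inner (p i t) (force i t))"
    using sum_sum_inner_diff_diff[OF finite_I, of "\<lambda>i. p i t" "\<lambda>i. force i t"]
    by (simp add: sum_distrib_left[symmetric] card_I sum_force_eq_0)
  moreover have "real N \<noteq> 0" using N_ge_2 by simp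
  ultimately show ?thesis by (simp add: sum_inner_force dissipation_def mult.assoc)
qed

lemma Qsq_has_derivative:
  assumes "0 < t"
  shows "(Qsq has_real_derivative (\<Sum>i\<in>I. \<Sum>j\<in>I. 2 * inner (q i t - q j t) (vel i t - vel j t))) (at t)"
  unfolding Qsq_def using assms
  by (intro DERIV_sum has_real_derivative_norm_power2 has_vector_derivative_diff q_has_derivative)

lemma Psq_cont: "continuous_on {0..} Psq"
  unfolding Psq_def by (intro continuous_intros) (auto simp: I_def intro: p_cont)

lemma Qsq_cont: "continuous_on {0..} Qsq"
  unfolding Qsq_def by (intro continuous_intros) (auto simp: I_def intro: q_cont)

lemma Psq_nonneg: "0 \<le> Psq t"
  unfolding Psq_def by (intro sum_nonneg) auto

lemma norm_le_sqrt_double_sum: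
  fixes x :: "nat \<Rightarrow> 'a"
  assumes "i \<in> I" "j \<in> I"
  shows "norm (x i - x j) \<le> sqrt (\<Sum>i\<in>I. \<Sum>j\<in>I. (norm (x i - x j))\<^sup>2)"
proof (rule real_le_rsqrt)
  have "(norm (x i - x j))\<^sup>2 \<le> (\<Sum>j\<in>I. (norm (x i - x j))\<^sup>2)"
    using assms finite_I by (intro member_le_sum) auto
  also have "\<dots> \<le> (\<Sum>i\<in>I. \<Sum>j\<in>I. (norm (x i - x j))\<^sup>2)"
    using assms finite_I by (intro member_le_sum sum_nonneg) auto
  finally show "(norm (x i - x j))\<^sup>2 \<le> (\<Sum>i\<in>I. \<Sum>j\<in>I. (norm (x i - x j))\<^sup>2)" .
qed

lemma norm_le_sqrt_Psq: "i \<in> I \<Longrightarrow> j \<in> I \<Longrightarrow> norm (p i t - p j t) \<le> sqrt (Psq t)"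
  unfolding Psq_def by (rule norm_le_sqrt_double_sum)

lemma norm_le_sqrt_Qsq: "i \<in> I \<Longrightarrow> j \<in> I \<Longrightarrow> norm (q i t - q j t) \<le> sqrt (Qsq t)"
  unfolding Qsq_def by (rule norm_le_sqrt_double_sum)

lemma psi_cont: "continuous_on {0<..} \<psi>"
  using psi_lip by (auto intro: continuous_on_if_abs_Lipschitz)

lemma g_mono: "mono_on {0..} g"
proof (rule mono_on_if_deriv_nonneg[OF g_deriv])
  fix r :: real assume "0 \<le> r"
  obtain m M' where "0 < m" "\<forall>s\<in>{0..r}. m \<le> dg s \<and> dg s \<le> M'" using dg_bounds by blast
  moreover have "r \<in> {0..r}" using \<open>0 \<le> r\<close> by simp
  ultimately have "m \<le> dg r" by blast
  then show "0 \<le> dg r" using \<open>0 < m\<close> by linarith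
qed

lemma initial_bounds:
  assumes "PM = Max ((\<lambda>i. norm (p i 0)) ` I)"
    and "mG = (INF r\<in>{0..PM}. dg r)" and "MG = (SUP r\<in>{0..PM}. dg r)"
  shows "\<forall>i\<in>I. norm (p i 0) \<le> PM" and "0 < mG" and "\<forall>r\<in>{0..PM}. mG \<le> dg r \<and> dg r \<le> MG"
proof -
  show speed0: "\<forall>i\<in>I. norm (p i 0) \<le> PM"
    using assms(1) finite_I by auto
  have "1 \<in> I" using N_ge_2 by (simp add: I_def)
  then have "0 \<le> PM" using speed0 norm_ge_zero[of "p 1 0"] order_trans by blast
  obtain m M' where "0 < m" "\<forall>r\<in>{0..PM}. m \<le> dg r \<and> dg r \<le> M'" using dg_bounds by blast
  then show "0 < mG" and "\<forall>r\<in>{0..PM}. mG \<le> dg r \<and> dg r \<le> MG"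
    using INF_SUP_bounds[of "{0..PM}" m dg M'] \<open>0 \<le> PM\<close> unfolding assms(2,3) by auto
qed

lemma dg_upper_bound_pos:
  assumes "\<forall>i\<in>I. norm (p i 0) \<le> PM" "0 < mG" "\<forall>r\<in>{0..PM}. mG \<le> dg r \<and> dg r \<le> MG"
  shows "0 < MG"
proof -
  have "1 \<in> I" using N_ge_2 by (simp add: I_def)
  then have "norm (p 1 0) \<le> PM" using assms(1) by blast
  then have "0 \<le> PM" using norm_ge_zero[of "p 1 0"] by linarith
  then have "mG \<le> dg 0 \<and> dg 0 \<le> MG" using assms(3) by simp
  then show ?thesis using assms(2) by linarith
qed

definition "speed_excess R i t = max 0 ((norm (p i t))\<^sup>2 - R\<^sup>2)"

lemma sum_speed_excess_has_derivative:
  assumes "0 < x"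
  shows "((\<lambda>t. \<Sum>i\<in>I. (speed_excess R i t)\<^sup>2) has_real_derivative
      - (2 * \<kappa> / real N) * (\<Sum>i\<in>I. \<Sum>k\<in>I. weight i k x *
          inner (speed_excess R k x *\<^sub>R p k x - speed_excess R i x *\<^sub>R p i x) (vel k x - vel i x))) (at x)"
proof -
  have "((\<lambda>t. \<Sum>i\<in>I. (speed_excess R i t)\<^sup>2) has_real_derivative
      (\<Sum>i\<in>I. 2 * speed_excess R i x * (2 * inner (p i x) (force i x)))) (at x)"
    unfolding speed_excess_def
  proof (intro DERIV_sum)
    fix i assume "i \<in> I"
    have "((\<lambda>t. (norm (p i t))\<^sup>2 - R\<^sup>2) has_real_derivative 2 * inner (p i x) (force i x)) (at x)"
      using DERIV_diff[OF has_real_derivative_norm_power2[OF p_has_derivative[OF \<open>i \<in> I\<close> assms]]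
          DERIV_const[of "R\<^sup>2"]] by simp
    then show "((\<lambda>t. (max 0 ((norm (p i t))\<^sup>2 - R\<^sup>2))\<^sup>2) has_real_derivative
        2 * max 0 ((norm (p i x))\<^sup>2 - R\<^sup>2) * (2 * inner (p i x) (force i x))) (at x)"
      by (rule DERIV_chain2[OF has_real_derivative_max0_power2])
  qed
  also have "(\<Sum>i\<in>I. 2 * speed_excess R i x * (2 * inner (p i x) (force i x)))
      = 4 * (\<Sum>i\<in>I. inner (speed_excess R i x *\<^sub>R p i x) (force i x))"
    by (simp add: sum_distrib_left algebra_simps)
  also have "\<dots> = - (2 * \<kappa> / real N) * (\<Sum>i\<in>I. \<Sum>k\<in>I. weight i k x *
          inner (speed_excess R k x *\<^sub>R p k x - speed_excess R i x *\<^sub>R p i x) (vel k x - vel i x))"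
    unfolding sum_inner_force by simp
  finally show ?thesis .
qed

lemma speed_excess_pairing_nonneg:
  assumes "i \<noteq> k \<Longrightarrow> q i x \<noteq> q k x"
  shows "0 \<le> weight i k x *
    inner (speed_excess R k x *\<^sub>R p k x - speed_excess R i x *\<^sub>R p i x) (vel k x - vel i x)"
proof (cases "i = k")
  case False
  have excess_mono: "mono_on {0..} (\<lambda>r. max 0 (r\<^sup>2 - R\<^sup>2))"
    by (intro mono_onI max.mono diff_right_mono power_mono) auto
  have "0 < weight i k x"
    using assms False by (auto simp: weight_def intro!: psi_pos)
  moreover have "0 \<le> inner (speed_excess R k x *\<^sub>R p k x - speed_excess R i x *\<^sub>R p i x) (vel k x - vel i x)"
    unfolding speed_excess_def vel_def
    by (rule velG_pairing_nonneg[OF excess_mono _ g_mono g_0]) simp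
  ultimately show ?thesis by simp
qed simp

text \<open>The weights are known to be nonnegative only between distinct positions (\<open>\<psi>\<close> is
  unconstrained at \<open>0\<close>), hence the hypothesis that no collision occurs.\<close>

lemma speed_bound:
  assumes "0 \<le> T"
    and no_collision: "\<forall>t\<in>{0..T}. \<forall>i\<in>I. \<forall>k\<in>I. i \<noteq> k \<longrightarrow> q i t \<noteq> q k t"
    and speed0: "\<forall>i\<in>I. norm (p i 0) \<le> R"
    and "t \<in> {0..T}" "i \<in> I"
  shows "norm (p i t) \<le> R"
proof -
  define \<Phi> where "\<Phi> t = (\<Sum>i\<in>I. (speed_excess R i t)\<^sup>2)" for t
  have "\<Phi> t \<le> \<Phi> 0"
  proof (rule DERIV_nonpos_imp_decreasing_open[of 0 t \<Phi>])
    show "0 \<le> t" using \<open>t \<in> {0..T}\<close> by simp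
    show "continuous_on {0..t} \<Phi>" unfolding \<Phi>_def speed_excess_def
      by (intro continuous_intros continuous_on_subset[OF p_cont]) (auto simp: I_def)
    fix x assume "0 < x" "x < t"
    then have "0 \<le> (2 * \<kappa> / real N) * (\<Sum>i\<in>I. \<Sum>k\<in>I. weight i k x *
        inner (speed_excess R k x *\<^sub>R p k x - speed_excess R i x *\<^sub>R p i x) (vel k x - vel i x))"
      using \<open>t \<in> {0..T}\<close> kappa_pos no_collision
      by (intro mult_nonneg_nonneg sum_nonneg speed_excess_pairing_nonneg) auto
    then show "\<exists>y. (\<Phi> has_real_derivative y) (at x) \<and> y \<le> 0"
      unfolding \<Phi>_def using sum_speed_excess_has_derivative[OF \<open>0 < x\<close>]
      by (intro exI conjI) (assumption, simp)
  qed
  moreover have "\<Phi> 0 = 0"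
  proof -
    have "(norm (p i 0))\<^sup>2 \<le> R\<^sup>2" if "i \<in> I" for i
      using speed0 that by (intro power_mono) auto
    then show ?thesis by (simp add: \<Phi>_def speed_excess_def)
  qed
  moreover have "(speed_excess R i t)\<^sup>2 \<le> \<Phi> t"
    unfolding \<Phi>_def using \<open>i \<in> I\<close> finite_I by (intro member_le_sum) auto
  ultimately have "(speed_excess R i t)\<^sup>2 \<le> 0"
    by linarith
  then have "speed_excess R i t = 0"
    by simp
  then have "(norm (p i t))\<^sup>2 \<le> R\<^sup>2"
    by (simp add: speed_excess_def max_def split: if_splits)
  moreover have "0 \<le> R" using speed0 \<open>i \<in> I\<close> norm_ge_zero order_trans by blast
  ultimately show ?thesis by (simp add: power2_le_iff_abs_le)
qed

context
  fixes PM mG MG T \<delta> :: real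
  assumes speed0: "\<forall>i\<in>I. norm (p i 0) \<le> PM"
    and mG_pos: "0 < mG" and dg_bounds: "\<forall>r\<in>{0..PM}. mG \<le> dg r \<and> dg r \<le> MG"
    and T_nonneg: "0 \<le> T" and delta_pos: "0 < \<delta>"
    and separated: "\<forall>t\<in>{0..T}. \<forall>i\<in>I. \<forall>j\<in>I. i \<noteq> j \<longrightarrow> \<delta> \<le> norm (q i t - q j t)"
begin

lemma MG_pos: "0 < MG"
  using speed0 mG_pos dg_bounds by (rule dg_upper_bound_pos)

lemma no_collision: "\<forall>t\<in>{0..T}. \<forall>i\<in>I. \<forall>k\<in>I. i \<noteq> k \<longrightarrow> q i t \<noteq> q k t"
proof (intro ballI impI)
  fix t i k assume "t \<in> {0..T}" "i \<in> I" "k \<in> I" "i \<noteq> k"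
  then have "\<delta> \<le> norm (q i t - q k t)" using separated by blast
  then show "q i t \<noteq> q k t" using delta_pos by auto
qed

lemma speed_le_PM: "t \<in> {0..T} \<Longrightarrow> i \<in> I \<Longrightarrow> norm (p i t) \<le> PM"
  by (rule speed_bound[OF T_nonneg no_collision speed0])

lemma vel_strongly_monotone:
  "t \<in> {0..T} \<Longrightarrow> i \<in> I \<Longrightarrow> k \<in> I \<Longrightarrow>
    mG * (norm (p k t - p i t))\<^sup>2 \<le> inner (p k t - p i t) (vel k t - vel i t)"
  unfolding vel_def using mG_pos dg_bounds speed_le_PM
  by (intro velG_strongly_monotone_lipschitz(1)[OF g_deriv g_0]) auto

lemma vel_lipschitz:
  "t \<in> {0..T} \<Longrightarrow> i \<in> I \<Longrightarrow> k \<in> I \<Longrightarrow> norm (vel i t - vel k t) \<le> MG * norm (p i t - p k t)"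
  unfolding vel_def using mG_pos dg_bounds speed_le_PM
  by (intro velG_strongly_monotone_lipschitz(2)[OF g_deriv g_0]) auto

lemma delta_le_sqrt_Qsq: "t \<in> {0..T} \<Longrightarrow> \<delta> \<le> sqrt (Qsq t)"
proof -
  assume "t \<in> {0..T}"
  moreover have "1 \<in> I" "2 \<in> I" using N_ge_2 by (auto simp: I_def)
  ultimately have "\<delta> \<le> norm (q 1 t - q 2 t)" using separated by auto
  also have "\<dots> \<le> sqrt (Qsq t)" using \<open>1 \<in> I\<close> \<open>2 \<in> I\<close> by (rule norm_le_sqrt_Qsq)
  finally show ?thesis .
qed

lemma sqrt_Qsq_pos: "t \<in> {0..T} \<Longrightarrow> 0 < sqrt (Qsq t)"
  using delta_le_sqrt_Qsq delta_pos by (rule order_less_le_trans[rotated])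

lemma psi_sqrt_Qsq_le_weight:
  assumes "t \<in> {0..T}" "i \<in> I" "k \<in> I" "i \<noteq> k"
  shows "\<psi> (sqrt (Qsq t)) \<le> weight i k t"
proof -
  have "\<delta> \<le> norm (q k t - q i t)" using separated assms by auto
  then show ?thesis
    unfolding weight_def using delta_pos norm_le_sqrt_Qsq[OF assms(3,2)]
    by (intro psi_antimono) auto
qed

lemma dissipation_ge: "t \<in> {0..T} \<Longrightarrow> \<psi> (sqrt (Qsq t)) * mG * Psq t \<le> dissipation t"
proof -
  assume t: "t \<in> {0..T}"
  have "\<psi> (sqrt (Qsq t)) * mG * Psq t
      = (\<Sum>i\<in>I. \<Sum>k\<in>I. \<psi> (sqrt (Qsq t)) * (mG * (norm (p k t - p i t))\<^sup>2))"
    by (simp add: Psq_def sum_distrib_left norm_minus_commute mult.assoc)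
  also have "\<dots> \<le> dissipation t"
    unfolding dissipation_def
  proof (intro sum_mono)
    fix i k assume "i \<in> I" "k \<in> I"
    show "\<psi> (sqrt (Qsq t)) * (mG * (norm (p k t - p i t))\<^sup>2)
        \<le> weight i k t * inner (p k t - p i t) (vel k t - vel i t)"
    proof (cases "i = k")
      case False
      have "0 \<le> \<psi> (sqrt (Qsq t))" using psi_pos[OF sqrt_Qsq_pos[OF t]] by simp
      then show ?thesis
        using psi_sqrt_Qsq_le_weight[OF t \<open>i \<in> I\<close> \<open>k \<in> I\<close> False]
          vel_strongly_monotone[OF t \<open>i \<in> I\<close> \<open>k \<in> I\<close>] mG_pos
        by (intro mult_mono) auto
    qed simp
  qed
  finally show ?thesis .
qed

lemma Qsq_derivative_le:
  assumes "t \<in> {0..T}"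
  shows "(\<Sum>i\<in>I. \<Sum>j\<in>I. 2 * inner (q i t - q j t) (vel i t - vel j t))
    \<le> 2 * MG * sqrt (Qsq t) * sqrt (Psq t)"
proof -
  have "(\<Sum>i\<in>I. \<Sum>j\<in>I. 2 * inner (q i t - q j t) (vel i t - vel j t))
      \<le> 2 * MG * (\<Sum>i\<in>I. \<Sum>j\<in>I. norm (q i t - q j t) * norm (p i t - p j t))"
    unfolding sum_distrib_left
  proof (intro sum_mono)
    fix i j assume "i \<in> I" "j \<in> I"
    have "inner (q i t - q j t) (vel i t - vel j t) \<le> norm (q i t - q j t) * norm (vel i t - vel j t)"
      by (rule norm_cauchy_schwarz)
    also have "\<dots> \<le> norm (q i t - q j t) * (MG * norm (p i t - p j t))"
      using vel_lipschitz[OF assms \<open>i \<in> I\<close> \<open>j \<in> I\<close>] by (intro mult_left_mono) auto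
    finally show "2 * inner (q i t - q j t) (vel i t - vel j t)
        \<le> 2 * MG * (norm (q i t - q j t) * norm (p i t - p j t))"
      by (simp add: algebra_simps)
  qed
  also have "\<dots> \<le> 2 * MG * (sqrt (Qsq t) * sqrt (Psq t))"
    unfolding Qsq_def Psq_def using MG_pos
    by (intro mult_left_mono double_sum_Cauchy_Schwarz) auto
  finally show ?thesis by (simp add: mult.assoc)
qed

lemma continuous_on_integral_sqrt_Qsq:
  "continuous_on {0..T} (\<lambda>x. integral {\<delta>/2..sqrt (Qsq x)} \<psi>)"
proof (rule continuous_on_compose2[of "{\<delta>/2<..}" "\<lambda>y. integral {\<delta>/2..y} \<psi>"])
  show "continuous_on {\<delta>/2<..} (\<lambda>y. integral {\<delta>/2..y} \<psi>)"
  proof (intro continuous_at_imp_continuous_on ballI)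
    fix y assume "y \<in> {\<delta>/2<..}"
    then show "isCont (\<lambda>y. integral {\<delta>/2..y} \<psi>) y"
      using delta_pos by (intro DERIV_isCont[OF integral_has_real_derivative_at[OF psi_cont]]) auto
  qed
  show "continuous_on {0..T} (\<lambda>x. sqrt (Qsq x))"
    by (intro continuous_intros continuous_on_subset[OF Qsq_cont]) auto
  show "(\<lambda>x. sqrt (Qsq x)) ` {0..T} \<subseteq> {\<delta>/2<..}"
    using delta_le_sqrt_Qsq delta_pos by fastforce
qed

lemma integral_sqrt_Qsq_has_derivative:
  assumes "0 < x" "x \<le> T"
  obtains d where "((\<lambda>x. integral {\<delta>/2..sqrt (Qsq x)} \<psi>) has_real_derivative d) (at x)"
    and "d \<le> MG * \<psi> (sqrt (Qsq x)) * sqrt (Psq x)"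
proof -
  let ?D = "\<Sum>i\<in>I. \<Sum>j\<in>I. 2 * inner (q i x - q j x) (vel i x - vel j x)"
  let ?y = "sqrt (Qsq x)"
  have x: "x \<in> {0..T}" using assms by simp
  have "\<delta> \<le> ?y" "0 < ?y" using delta_le_sqrt_Qsq[OF x] sqrt_Qsq_pos[OF x] by auto
  have "((\<lambda>x. sqrt (Qsq x)) has_real_derivative inverse ?y / 2 * ?D) (at x)"
    using \<open>0 < ?y\<close> by (intro DERIV_chain2[OF DERIV_real_sqrt Qsq_has_derivative[OF \<open>0 < x\<close>]]) simp
  then have "((\<lambda>x. integral {\<delta>/2..sqrt (Qsq x)} \<psi>) has_real_derivative \<psi> ?y * (inverse ?y / 2 * ?D)) (at x)"
    using delta_pos \<open>\<delta> \<le> ?y\<close>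
    by (intro DERIV_chain2[OF integral_has_real_derivative_at[OF psi_cont]]) auto
  moreover have "\<psi> ?y * (inverse ?y / 2 * ?D) \<le> MG * \<psi> ?y * sqrt (Psq x)"
  proof -
    have "inverse ?y / 2 * ?D \<le> MG * sqrt (Psq x)"
      using Qsq_derivative_le[OF x] \<open>0 < ?y\<close> by (simp add: field_simps)
    then show ?thesis using psi_pos[OF \<open>0 < ?y\<close>]
      by (simp add: mult_left_mono mult.left_commute)
  qed
  ultimately show ?thesis using that by blast
qed

lemma sqrt_regularized_Psq_has_derivative:
  assumes "0 < x" "x \<le> T" "0 < s"
  obtains d where "((\<lambda>x. sqrt (Psq x + s\<^sup>2)) has_real_derivative d) (at x)"
    and "d \<le> - (\<kappa> * mG * \<psi> (sqrt (Qsq x)) * (sqrt (Psq x) - s))"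
proof -
  let ?z = "sqrt (Psq x + s\<^sup>2)" and ?w = "\<psi> (sqrt (Qsq x))"
  have x: "x \<in> {0..T}" using assms by simp
  have "0 < Psq x + s\<^sup>2" using Psq_nonneg[of x] \<open>0 < s\<close> by (simp add: add_nonneg_pos)
  have "((\<lambda>x. Psq x + s\<^sup>2) has_real_derivative - 2 * \<kappa> * dissipation x) (at x)"
    using Psq_has_derivative[OF \<open>0 < x\<close>] by (auto intro!: derivative_eq_intros)
  then have "((\<lambda>x. sqrt (Psq x + s\<^sup>2)) has_real_derivative inverse ?z / 2 * (- 2 * \<kappa> * dissipation x)) (at x)"
    by (rule DERIV_chain2[where g = "\<lambda>x. Psq x + s\<^sup>2", OF DERIV_real_sqrt[OF \<open>0 < Psq x + s\<^sup>2\<close>]])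
  moreover have "inverse ?z / 2 * (- 2 * \<kappa> * dissipation x) \<le> - (\<kappa> * mG * ?w * (sqrt (Psq x) - s))"
  proof -
    have "0 < ?z" "0 \<le> ?w * mG" using \<open>0 < Psq x + s\<^sup>2\<close> psi_pos[OF sqrt_Qsq_pos[OF x]] mG_pos by auto
    have "?w * mG * (sqrt (Psq x) - s) \<le> ?w * mG * (Psq x / ?z)"
      using sqrt_diff_le_divide_sqrt_add[OF Psq_nonneg \<open>0 < s\<close>] \<open>0 \<le> ?w * mG\<close>
      by (rule mult_left_mono)
    also have "\<dots> \<le> dissipation x / ?z"
      using dissipation_ge[OF x] \<open>0 < ?z\<close> by (simp add: divide_right_mono)
    finally have "\<kappa> * (?w * mG * (sqrt (Psq x) - s)) \<le> \<kappa> * (dissipation x / ?z)"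
      using kappa_pos by (intro mult_left_mono) auto
    moreover have "inverse ?z / 2 * (- 2 * \<kappa> * dissipation x) = - (\<kappa> * (dissipation x / ?z))"
      by (simp add: field_simps)
    ultimately show ?thesis by (simp add: mult_ac)
  qed
  ultimately show ?thesis using that by blast
qed

text \<open>Since \<open>\<parallel>P\<parallel>\<close> may vanish, the Lyapunov functional uses \<open>sqrt (\<parallel>P\<parallel>\<^sup>2 + s\<^sup>2)\<close> in place of
  \<open>\<parallel>P\<parallel>\<close>, at the price of a drift of order \<open>s\<close>.\<close>

lemma regularized_lyapunov_decreasing:
  assumes "t \<in> {0..T}" "0 < s"
  shows "integral {\<delta>/2..sqrt (Qsq t)} \<psi> + MG / (\<kappa> * mG) * sqrt (Psq t + s\<^sup>2) - MG * \<psi> \<delta> * s * t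
    \<le> integral {\<delta>/2..sqrt (Qsq 0)} \<psi> + MG / (\<kappa> * mG) * sqrt (Psq 0 + s\<^sup>2)"
proof -
  define c where "c = MG / (\<kappa> * mG)"
  have "0 \<le> c" using MG_pos kappa_pos mG_pos by (simp add: c_def)
  define F where "F x = integral {\<delta>/2..sqrt (Qsq x)} \<psi> + c * sqrt (Psq x + s\<^sup>2) - MG * \<psi> \<delta> * s * x" for x
  have "F t \<le> F 0"
  proof (rule DERIV_nonpos_imp_decreasing_open[of 0 t F])
    show "0 \<le> t" using assms by simp
    show "continuous_on {0..t} F"
      unfolding F_def using assms
      by (intro continuous_intros continuous_on_subset[OF continuous_on_integral_sqrt_Qsq]
          continuous_on_subset[OF Psq_cont]) auto
    fix x assume "0 < x" "x < t"
    then have "x \<le> T" "x \<in> {0..T}" using assms by auto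
    obtain d1 where d1: "((\<lambda>x. integral {\<delta>/2..sqrt (Qsq x)} \<psi>) has_real_derivative d1) (at x)"
      "d1 \<le> MG * \<psi> (sqrt (Qsq x)) * sqrt (Psq x)"
      by (rule integral_sqrt_Qsq_has_derivative[OF \<open>0 < x\<close> \<open>x \<le> T\<close>])
    obtain d2 where d2: "((\<lambda>x. sqrt (Psq x + s\<^sup>2)) has_real_derivative d2) (at x)"
      "d2 \<le> - (\<kappa> * mG * \<psi> (sqrt (Qsq x)) * (sqrt (Psq x) - s))"
      by (rule sqrt_regularized_Psq_has_derivative[OF \<open>0 < x\<close> \<open>x \<le> T\<close> \<open>0 < s\<close>])
    have "(F has_real_derivative d1 + c * d2 - MG * \<psi> \<delta> * s * 1) (at x)"
      unfolding F_def by (intro DERIV_diff DERIV_add DERIV_cmult d1(1) d2(1) DERIV_ident)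
    moreover have "d1 + c * d2 - MG * \<psi> \<delta> * s \<le> 0"
    proof -
      have "c * d2 \<le> - (MG * \<psi> (sqrt (Qsq x)) * (sqrt (Psq x) - s))"
        using mult_left_mono[OF d2(2) \<open>0 \<le> c\<close>] kappa_pos mG_pos by (simp add: c_def)
      moreover have "\<psi> (sqrt (Qsq x)) \<le> \<psi> \<delta>"
        using delta_pos delta_le_sqrt_Qsq[OF \<open>x \<in> {0..T}\<close>] by (rule psi_antimono)
      then have "MG * \<psi> (sqrt (Qsq x)) * s \<le> MG * \<psi> \<delta> * s"
        using MG_pos \<open>0 < s\<close> by simp
      ultimately show ?thesis using d1(2) by (simp add: algebra_simps)
    qed
    ultimately show "\<exists>y. (F has_real_derivative y) (at x) \<and> y \<le> 0" by auto
  qed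
  then show ?thesis by (simp add: F_def c_def)
qed

lemma lyapunov_estimate:
  assumes "t \<in> {0..T}"
  shows "oint \<psi> (sqrt (Qsq 0)) (sqrt (Qsq t)) \<le> MG * sqrt (Psq 0) / (\<kappa> * mG)"
proof -
  define c where "c = MG / (\<kappa> * mG)"
  have "0 \<le> c" using MG_pos kappa_pos mG_pos by (simp add: c_def)
  define \<Psi> where "\<Psi> x = integral {\<delta>/2..sqrt (Qsq x)} \<psi>" for x
  have "\<Psi> t - \<Psi> 0 \<le> c * sqrt (Psq 0) + (c + MG * \<psi> \<delta> * t) * s" if "0 < s" for s
  proof -
    have "c * sqrt (Psq 0 + s\<^sup>2) \<le> c * (sqrt (Psq 0) + s)"
      using \<open>0 \<le> c\<close> \<open>0 < s\<close> Psq_nonneg[of 0]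
      by (intro mult_left_mono real_le_lsqrt) (auto simp: power2_eq_square algebra_simps)
    moreover have "0 \<le> c * sqrt (Psq t + s\<^sup>2)"
      using \<open>0 \<le> c\<close> Psq_nonneg[of t] by simp
    moreover note regularized_lyapunov_decreasing[OF assms that, folded c_def \<Psi>_def]
    moreover have "c * (sqrt (Psq 0) + s) = c * sqrt (Psq 0) + c * s"
      and "(c + MG * \<psi> \<delta> * t) * s = c * s + MG * \<psi> \<delta> * s * t"
      by (simp_all add: algebra_simps)
    ultimately show ?thesis by linarith
  qed
  moreover have "0 \<le> c + MG * \<psi> \<delta> * t"
    using \<open>0 \<le> c\<close> MG_pos psi_pos[OF delta_pos] assms by simp
  ultimately have "\<Psi> t - \<Psi> 0 \<le> c * sqrt (Psq 0)"
    by (blast intro: le_if_le_add_all_pos_mult)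
  moreover have "oint \<psi> (sqrt (Qsq 0)) (sqrt (Qsq t)) = \<Psi> t - \<Psi> 0"
    unfolding \<Psi>_def using delta_pos delta_le_sqrt_Qsq[of 0] delta_le_sqrt_Qsq[OF assms] T_nonneg
    by (intro oint_eq_integral_diff[OF psi_cont]) auto
  ultimately show ?thesis by (simp add: c_def)
qed

context
  fixes Mc :: real
  assumes Mc_pos: "0 < Mc"
    and integral_condition: "MG * sqrt (Psq 0) / (\<kappa> * mG) < oint \<psi> (sqrt (Qsq 0)) Mc"
begin

lemma sqrt_Qsq_lt: "t \<in> {0..T} \<Longrightarrow> sqrt (Qsq t) < Mc"
proof (rule ccontr)
  assume t: "t \<in> {0..T}" and "\<not> sqrt (Qsq t) < Mc"
  then have "Mc \<le> sqrt (Qsq t)" by simp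
  have "0 < sqrt (Qsq 0)" using T_nonneg by (intro sqrt_Qsq_pos) simp
  then have "oint \<psi> (sqrt (Qsq 0)) Mc + oint \<psi> Mc (sqrt (Qsq t)) = oint \<psi> (sqrt (Qsq 0)) (sqrt (Qsq t))"
    using Mc_pos sqrt_Qsq_pos[OF t] by (intro oint_add[OF psi_cont])
  moreover have "0 \<le> oint \<psi> Mc (sqrt (Qsq t))"
    using Mc_pos \<open>Mc \<le> sqrt (Qsq t)\<close> psi_pos by (intro oint_nonneg[OF psi_cont]) (auto intro: less_imp_le)
  ultimately show False
    using lyapunov_estimate[OF t] integral_condition by linarith
qed

lemma Psq_decay:
  assumes "t \<in> {0..T}"
  shows "sqrt (Psq t) \<le> sqrt (Psq 0) * exp (- (\<kappa> * mG * \<psi> Mc) * t)"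
proof -
  define rate where "rate = \<kappa> * mG * \<psi> Mc"
  define H where "H x = Psq x * exp (2 * rate * x)" for x
  have "H t \<le> H 0"
  proof (rule DERIV_nonpos_imp_decreasing_open[of 0 t H])
    show "0 \<le> t" using assms by simp
    show "continuous_on {0..t} H" unfolding H_def
      by (intro continuous_intros continuous_on_subset[OF Psq_cont]) auto
    fix x assume "0 < x" "x < t"
    then have x: "x \<in> {0..T}" using assms by auto
    have "(H has_real_derivative (- 2 * \<kappa> * dissipation x + 2 * rate * Psq x) * exp (2 * rate * x)) (at x)"
      unfolding H_def using Psq_has_derivative[OF \<open>0 < x\<close>]
      by (auto intro!: derivative_eq_intros simp: algebra_simps)
    moreover have "rate * Psq x \<le> \<kappa> * dissipation x"
    proof -
      have "\<psi> Mc \<le> \<psi> (sqrt (Qsq x))"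
        using sqrt_Qsq_pos[OF x] sqrt_Qsq_lt[OF x] by (intro psi_antimono) auto
      then have "\<psi> Mc * mG * Psq x \<le> \<psi> (sqrt (Qsq x)) * mG * Psq x"
        using mG_pos Psq_nonneg[of x] by (intro mult_right_mono) auto
      also have "\<dots> \<le> dissipation x" by (rule dissipation_ge[OF x])
      finally show ?thesis
        using mult_left_mono[of _ _ \<kappa>] kappa_pos by (simp add: rate_def mult_ac)
    qed
    then have "(- 2 * \<kappa> * dissipation x + 2 * rate * Psq x) * exp (2 * rate * x) \<le> 0"
      by (intro mult_nonpos_nonneg) auto
    ultimately show "\<exists>y. (H has_real_derivative y) (at x) \<and> y \<le> 0" by blast
  qed
  then have "Psq t \<le> Psq 0 * (exp (- rate * t))\<^sup>2"
    by (simp add: H_def exp_minus field_simps power2_eq_square flip: exp_add)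
  then have "sqrt (Psq t) \<le> sqrt (Psq 0 * (exp (- rate * t))\<^sup>2)"
    by (rule real_sqrt_le_mono)
  then show ?thesis by (simp add: real_sqrt_mult rate_def)
qed

lemma relative_displacement_le:
  assumes t: "t \<in> {0..T}" and "i \<in> I" "j \<in> I"
  shows "norm ((q i t - q j t) - (q i 0 - q j 0)) \<le> MG * sqrt (Psq 0) / (\<kappa> * mG * \<psi> Mc)"
proof -
  define rate where "rate = \<kappa> * mG * \<psi> Mc"
  have "0 < rate" using kappa_pos mG_pos psi_pos[OF Mc_pos] by (simp add: rate_def)
  define A where "A = MG * sqrt (Psq 0) / rate"
  have "0 \<le> A" using \<open>0 < rate\<close> MG_pos Psq_nonneg[of 0] by (simp add: A_def)
  show ?thesis
  proof (cases "t = 0")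
    case True
    then show ?thesis using \<open>0 \<le> A\<close> by (simp add: A_def rate_def)
  next
    case False
    then have "0 < t" using t by simp
    have "norm ((q i t - q j t) - (q i 0 - q j 0)) \<le> (- A * exp (- rate * t)) - (- A * exp (- rate * 0))"
    proof (rule differentiable_bound_general[OF \<open>0 < t\<close>, where f' = "\<lambda>x. vel i x - vel j x"
          and \<phi>' = "\<lambda>x. A * rate * exp (- rate * x)"])
      show "continuous_on {0..t} (\<lambda>x. q i x - q j x)"
        using \<open>i \<in> I\<close> \<open>j \<in> I\<close> by (intro continuous_intros continuous_on_subset[OF q_cont]) (auto simp: I_def)
      show "continuous_on {0..t} (\<lambda>x. - A * exp (- rate * x))"
        by (intro continuous_intros)
      fix x assume "0 < x" "x < t"
      then have x: "x \<in> {0..T}" using t by auto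
      show "((\<lambda>x. q i x - q j x) has_vector_derivative vel i x - vel j x) (at x)"
        using \<open>i \<in> I\<close> \<open>j \<in> I\<close> \<open>0 < x\<close> by (intro has_vector_derivative_diff q_has_derivative)
      have "((\<lambda>x. - A * exp (- rate * x)) has_real_derivative A * rate * exp (- rate * x)) (at x)"
        by (auto intro!: derivative_eq_intros)
      then show "((\<lambda>x. - A * exp (- rate * x)) has_vector_derivative A * rate * exp (- rate * x)) (at x)"
        by (simp add: has_real_derivative_iff_has_vector_derivative)
      have "norm (vel i x - vel j x) \<le> MG * norm (p i x - p j x)"
        by (rule vel_lipschitz[OF x \<open>i \<in> I\<close> \<open>j \<in> I\<close>])
      also have "\<dots> \<le> MG * (sqrt (Psq 0) * exp (- rate * x))"
        using norm_le_sqrt_Psq[OF \<open>i \<in> I\<close> \<open>j \<in> I\<close>, of x] Psq_decay[OF x] MG_pos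
        by (intro mult_left_mono) (auto simp: rate_def)
      also have "\<dots> = A * rate * exp (- rate * x)" using \<open>0 < rate\<close> by (simp add: A_def)
      finally show "norm (vel i x - vel j x) \<le> A * rate * exp (- rate * x)" .
    qed
    also have "\<dots> \<le> A" using \<open>0 \<le> A\<close> by (simp add: algebra_simps)
    finally show ?thesis by (simp add: A_def rate_def)
  qed
qed

lemma separation_strict:
  assumes margin: "\<forall>i\<in>I. \<forall>j\<in>I. i \<noteq> j \<longrightarrow>
      MG * sqrt (Psq 0) / (\<kappa> * mG * \<psi> Mc) + \<delta> < norm (q i 0 - q j 0)"
    and "t \<in> {0..T}" "i \<in> I" "j \<in> I" "i \<noteq> j"
  shows "\<delta> < norm (q i t - q j t)"
proof -
  have "norm (q i 0 - q j 0) - norm (q i t - q j t) \<le> norm ((q i t - q j t) - (q i 0 - q j 0))"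
    by (metis norm_minus_commute norm_triangle_ineq2)
  then show ?thesis
    using relative_displacement_le[OF assms(2-4)] margin assms(3-5) by fastforce
qed

end

end

lemma separation_persists:
  assumes speed0: "\<forall>i\<in>I. norm (p i 0) \<le> PM"
    and mG_pos: "0 < mG" and dg_bounds: "\<forall>r\<in>{0..PM}. mG \<le> dg r \<and> dg r \<le> MG"
    and Mc_pos: "0 < Mc"
    and integral_condition: "MG * sqrt (Psq 0) / (\<kappa> * mG) < oint \<psi> (sqrt (Qsq 0)) Mc"
    and "0 < \<delta>"
    and margin: "\<forall>i\<in>I. \<forall>j\<in>I. i \<noteq> j \<longrightarrow>
      MG * sqrt (Psq 0) / (\<kappa> * mG * \<psi> Mc) + \<delta> < norm (q i 0 - q j 0)"
    and "0 \<le> t" "i \<in> I" "j \<in> I" "i \<noteq> j"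
  shows "\<delta> < norm (q i t - q j t)"
proof -
  let ?pairs = "{(i, j). i \<in> I \<and> j \<in> I \<and> i \<noteq> j}"
  let ?gap = "\<lambda>x t. norm (q (fst x) t - q (snd x) t) - \<delta>"
  have "0 \<le> MG * sqrt (Psq 0) / (\<kappa> * mG * \<psi> Mc)"
    using dg_upper_bound_pos[OF speed0 mG_pos dg_bounds] Psq_nonneg[of 0] kappa_pos mG_pos
      psi_pos[OF Mc_pos] by simp
  have "0 < ?gap (i, j) t"
  proof (rule continuity_argument[where K = ?pairs and h = ?gap])
    show "finite ?pairs"
      by (rule finite_subset[of _ "I \<times> I"]) (auto simp: finite_I)
    show "continuous_on {0..} (?gap x)" if "x \<in> ?pairs" for x
      using that by (intro continuous_intros q_cont) (auto simp: I_def)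
    show "0 < ?gap x 0" if "x \<in> ?pairs" for x
      using margin that \<open>0 \<le> MG * sqrt (Psq 0) / (\<kappa> * mG * \<psi> Mc)\<close> by fastforce
    fix T :: real assume "0 \<le> T" and nonneg: "\<forall>t\<in>{0..T}. \<forall>x\<in>?pairs. 0 \<le> ?gap x t"
    have separated: "\<forall>t\<in>{0..T}. \<forall>i\<in>I. \<forall>j\<in>I. i \<noteq> j \<longrightarrow> \<delta> \<le> norm (q i t - q j t)"
    proof (intro ballI impI)
      fix t i j assume "t \<in> {0..T}" "i \<in> I" "j \<in> I" "i \<noteq> j"
      then show "\<delta> \<le> norm (q i t - q j t)" using nonneg[rule_format, of t "(i, j)"] by simp
    qed
    show "\<forall>t\<in>{0..T}. \<forall>x\<in>?pairs. 0 < ?gap x t"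
      using separation_strict[OF speed0 mG_pos dg_bounds \<open>0 \<le> T\<close> \<open>0 < \<delta>\<close> separated Mc_pos
          integral_condition margin] by auto
  qed (use assms in auto)
  then show ?thesis by simp
qed

theorem collision_avoidance:
  assumes Mc_pos: "0 < Mc" and speed0: "\<forall>i\<in>I. norm (p i 0) \<le> PM"
    and mG_pos: "0 < mG" and dg_bounds: "\<forall>r\<in>{0..PM}. mG \<le> dg r \<and> dg r \<le> MG"
    and L: "MG * sqrt (Psq 0) / (\<kappa> * mG) \<le> L"
    and integral_condition: "L < oint \<psi> (sqrt (Qsq 0)) Mc"
    and distance_condition: "\<forall>i\<in>I. \<forall>j\<in>I. i \<noteq> j \<longrightarrow> L < \<psi> Mc * norm (q i 0 - q j 0)"
  shows "\<exists>\<delta>>0. \<forall>t\<ge>0. \<forall>i\<in>I. \<forall>j\<in>I. i \<noteq> j \<longrightarrow> \<delta> \<le> norm (q i t - q j t)"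
proof -
  let ?pairs = "{(i, j). i \<in> I \<and> j \<in> I \<and> i \<noteq> j}"
  let ?L = "MG * sqrt (Psq 0) / (\<kappa> * mG * \<psi> Mc)"
  have "0 < \<psi> Mc" using psi_pos[OF Mc_pos] .
  have below: "?L < norm (q (fst x) 0 - q (snd x) 0)" if "x \<in> ?pairs" for x
  proof -
    have "?L \<le> L / \<psi> Mc"
      using divide_right_mono[OF L, of "\<psi> Mc"] \<open>0 < \<psi> Mc\<close> by (simp add: mult.assoc)
    also have "\<dots> < norm (q (fst x) 0 - q (snd x) 0)"
      using distance_condition that \<open>0 < \<psi> Mc\<close> by (auto simp: pos_divide_less_eq mult.commute)
    finally show ?thesis .
  qed
  have "finite ?pairs"
    by (rule finite_subset[of _ "I \<times> I"]) (auto simp: finite_I)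
  then obtain \<delta> where "0 < \<delta>"
    and margin: "\<And>x. x \<in> ?pairs \<Longrightarrow> ?L + \<delta> < norm (q (fst x) 0 - q (snd x) 0)"
    using finite_uniform_margin[of ?pairs "\<lambda>x. ?L" "\<lambda>x. norm (q (fst x) 0 - q (snd x) 0)"] below
    by blast
  have "\<forall>i\<in>I. \<forall>j\<in>I. i \<noteq> j \<longrightarrow> ?L + \<delta> < norm (q i 0 - q j 0)"
    using margin by auto
  moreover have "MG * sqrt (Psq 0) / (\<kappa> * mG) < oint \<psi> (sqrt (Qsq 0)) Mc"
    using L integral_condition by linarith
  ultimately have "\<delta> < norm (q i t - q j t)" if "0 \<le> t" "i \<in> I" "j \<in> I" "i \<noteq> j" for t i j
    using separation_persists[OF speed0 mG_pos dg_bounds Mc_pos _ \<open>0 < \<delta>\<close> _ that] by blast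
  then show ?thesis using \<open>0 < \<delta>\<close> by (meson less_imp_le)
qed

end

theorem corollary2p1:
  fixes N :: nat and \<kappa> :: real
    and g dg \<psi> :: "real \<Rightarrow> real"
    and q p :: "nat \<Rightarrow> real \<Rightarrow> 'a::euclidean_space"
    and Mc :: real
  assumes N_pos: "N \<ge> 1"
    and kappa_pos: "\<kappa> > 0"
    and g_deriv: "\<And>r. r \<ge> 0 \<Longrightarrow> (g has_real_derivative dg r) (at r within {0..})"
    and dg_cont: "continuous_on {0..} dg"
    and g0: "g 0 = 0"
    and dg_bounds: "\<And>b. \<exists>m M'. 0 < m \<and> (\<forall>r\<in>{0..b}. m \<le> dg r \<and> dg r \<le> M')"
    and g_cvx: "convex_on {0<..} g \<or> concave_on {0<..} g"
    and psi_pos: "\<And>r. r > 0 \<Longrightarrow> \<psi> r > 0"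
    and psi_bdd: "bounded (\<psi> ` {0<..})"
    and psi_lip: "\<exists>L. \<forall>r>0. \<forall>s>0. \<bar>\<psi> r - \<psi> s\<bar> \<le> L * \<bar>r - s\<bar>"
    and psi_mono: "\<And>r s. 0 < r \<Longrightarrow> r \<le> s \<Longrightarrow> \<psi> s \<le> \<psi> r"
    and q_cont: "\<And>i. i \<in> {1..N} \<Longrightarrow> continuous_on {0..} (q i)"
    and p_cont: "\<And>i. i \<in> {1..N} \<Longrightarrow> continuous_on {0..} (p i)"
    and q_ode: "\<And>i t. i \<in> {1..N} \<Longrightarrow> t > 0 \<Longrightarrow>
                  (q i has_vector_derivative velG g (p i t)) (at t)"
    and p_ode: "\<And>i t. i \<in> {1..N} \<Longrightarrow> t > 0 \<Longrightarrow>
                  (p i has_vector_derivative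
                     (\<kappa> / real N) *\<^sub>R (\<Sum>k\<in>{1..N}. \<psi> (norm (q k t - q i t)) *\<^sub>R
                         (velG g (p k t) - velG g (p i t)))) (at t)"
    and M_pos: "0 < Mc"
    and hyp: "let PM = Max ((\<lambda>i. norm (p i 0)) ` {1..N});
                  MG = (SUP r\<in>{0..PM}. dg r);
                  mG = (INF r\<in>{0..PM}. dg r);
                  \<M> = min mG (mG\<^sup>2 / MG);
                  lhs = MG * cfg_norm N (\<lambda>i. p i 0) / (\<kappa> * \<M>)
              in lhs < oint \<psi> (cfg_norm N (\<lambda>i. q i 0)) Mc \<and>
                 (\<forall>i\<in>{1..N}. \<forall>j\<in>{1..N}. i \<noteq> j \<longrightarrow>
                     lhs < \<psi> Mc * norm (q i 0 - q j 0))"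
  shows "\<exists>\<delta>>0. \<forall>t\<ge>0. \<forall>i\<in>{1..N}. \<forall>j\<in>{1..N}. i \<noteq> j \<longrightarrow> \<delta> \<le> norm (q i t - q j t)"
proof (cases "N = 1")
  case True
  then show ?thesis by (intro exI[of _ 1]) auto
next
  case False
  interpret cucker_smale N \<kappa> g dg \<psi> q p
    using N_pos False kappa_pos g_deriv g0 dg_bounds psi_pos psi_lip psi_mono q_cont p_cont q_ode p_ode
    by unfold_locales auto
  define PM where "PM = Max ((\<lambda>i. norm (p i 0)) ` {1..N})"
  define MG where "MG = (SUP r\<in>{0..PM}. dg r)"
  define mG where "mG = (INF r\<in>{0..PM}. dg r)"
  have "PM = Max ((\<lambda>i. norm (p i 0)) ` I)" by (simp add: PM_def I_def)
  note bounds = initial_bounds[OF this mG_def MG_def]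
  have "cfg_norm N (\<lambda>i. p i 0) = sqrt (Psq 0)" "cfg_norm N (\<lambda>i. q i 0) = sqrt (Qsq 0)"
    by (simp_all add: cfg_norm_def Psq_def Qsq_def I_def)
  then have conditions:
    "MG * sqrt (Psq 0) / (\<kappa> * min mG (mG\<^sup>2 / MG)) < oint \<psi> (sqrt (Qsq 0)) Mc"
    "\<forall>i\<in>I. \<forall>j\<in>I. i \<noteq> j \<longrightarrow> MG * sqrt (Psq 0) / (\<kappa> * min mG (mG\<^sup>2 / MG)) < \<psi> Mc * norm (q i 0 - q j 0)"
    using hyp unfolding Let_def PM_def[symmetric] MG_def[symmetric] mG_def[symmetric] I_def
    by simp_all
  have "0 < MG" using bounds by (rule dg_upper_bound_pos)
  \<comment> \<open>The paper's constant \<open>\<M> = min m\<^sub>G (m\<^sub>G\<^sup>2/M\<^sub>G)\<close> could be replaced by the larger \<open>m\<^sub>G\<close>.\<close>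
  then have "MG * sqrt (Psq 0) / (\<kappa> * mG) \<le> MG * sqrt (Psq 0) / (\<kappa> * min mG (mG\<^sup>2 / MG))"
    using bounds(2) kappa_pos Psq_nonneg[of 0]
    by (intro divide_left_mono mult_left_mono mult_pos_pos) auto
  from collision_avoidance[OF M_pos bounds this conditions] show ?thesis
    by (simp add: I_def)
qed

end
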